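(* Define the following four subsets of $\mathbb{R}^5$. (1) $D_5$ is the set of all $40$ vectors obtained by permuting the coordinates of $(\pm 1,\pm 1,0,0,0)$ (all sign choices). (2) $L_5$ is obtained from $D_5$ by removing the $8$ vectors whose fifth coordinate equals $1$ (namely the permutations of $(\pm1,0,0,0)$ in the first four coordinates, with fifth coordinate $1$) and adding the $8$ vectors $(\pm\tfrac12,\pm\tfrac12,\pm\tfrac12,\pm\tfrac12,1)$ having an odd number of minus signs among the first four coordinates. (3) $Q_5$ is obtained from $D_5$ by removing the $10$ vectors with coordinate sum $2$ (the permutations of $(1,1,0,0,0)$) and adding the $10$ vectors obtained by permuting the coordinates of $(-\tfrac15,-\tfrac15,\tfrac45,\tfrac45,\tfrac45)$. (These are the images of the $10$ vectors with coordinate sum $-2$ under the reflection $v\mapsto v-2\langle v,w\rangle w$, $w=(1,1,1,1,1)/\sqrt5$, across the hyperplane of coordinate sum $0$.) (4) $R_5$ is obtained from $L_5$ by removing the $10$ vectors of $L_5$ with coordinate sum $2$ and adding the $10$ vectors obtained by permuting the coordinates of $(-\tfrac15,-\tfrac15,\tfrac45,\tfrac45,\tfrac45)$. Then each of $D_5$, $L_5$, $Q_5$, $R_5$ is a kissing configuration of $40$ points in $\mathbb{R}^5$, and no two of them are isometric. In particular, there are at least four pairwise non-isometric kissing configurations of $40$ points in five dimensions.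
   Context: A kissing configuration in $\mathbb{R}^n$ is a finite set of vectors all of the same norm $r>0$ such that any two distinct vectors form an angle of at least $\pi/3$, i.e. have inner product at most $r^2/2$; here all vectors have squared norm $2$, so the condition is that distinct vectors have inner product at most $1$. Two configurations are isometric if some orthogonal transformation of $\mathbb{R}^n$ maps one onto the other. *)

theory Defs
  imports "HOL-Analysis.Analysis"
begin

text \<open>Vectors in R^5 are modelled as real^5; the five coordinates are
  v$1, v$2, v$3, v$4, v$5 (the index literals 1,...,5 of type 5 are the
  five distinct elements of the index type; v$5 is the fifth coordinate).\<close>

definition kissing_config :: "('a::real_inner) set \<Rightarrow> bool" where
  "kissing_config A \<longleftrightarrow> finite A \<and> (\<forall>v\<in>A. v \<bullet> v = 2) \<and>
     (\<forall>v\<in>A. \<forall>w\<in>A. v \<noteq> w \<longrightarrow> v \<bullet> w \<le> 1)"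

definition isometric :: "('a::real_inner) set \<Rightarrow> 'a set \<Rightarrow> bool" where
  "isometric A B \<longleftrightarrow> (\<exists>f. orthogonal_transformation f \<and> f ` A = B)"

definition coord_sum :: "real^5 \<Rightarrow> real" where
  "coord_sum v = (\<Sum>i\<in>UNIV. v $ i)"

definition D5 :: "(real^5) set" where
  "D5 = {v. (\<forall>i. v $ i \<in> {-1, 0, 1}) \<and> card {i. v $ i \<noteq> 0} = 2}"

definition half_vecs :: "(real^5) set" where
  "half_vecs = {v. (\<forall>i\<in>{1,2,3,4}. v $ i \<in> {-1/2, 1/2}) \<and> v $ 5 = 1 \<and>
                    odd (card {i\<in>{1,2,3,4::5}. v $ i < 0})}"

definition L5 :: "(real^5) set" where
  "L5 = (D5 - {v\<in>D5. v $ 5 = 1}) \<union> half_vecs"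

definition fifth_vecs :: "(real^5) set" where
  "fifth_vecs = {v. (\<forall>i. v $ i \<in> {-1/5, 4/5}) \<and> card {i. v $ i = 4/5} = 3}"

definition Q5 :: "(real^5) set" where
  "Q5 = (D5 - {v\<in>D5. coord_sum v = 2}) \<union> fifth_vecs"

definition R5 :: "(real^5) set" where
  "R5 = (L5 - {v\<in>L5. coord_sum v = 2}) \<union> fifth_vecs"

end

theory Submission
  imports Defs
begin

text \<open>All four sets are explicit finite sets, so being a kissing configuration of 40 points is a
  finite computation. They are told apart by the set of inner products occurring between their
  vectors, which orthogonal maps preserve: \<open>-1/2\<close> occurs only in \<open>L5\<close> and \<open>R5\<close> (a half
  vector against a vector of \<open>D5\<close> with fifth coordinate \<open>-1\<close>), and \<open>-8/5\<close> only in \<open>Q5\<close> and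
  \<open>R5\<close> (a permutation of \<open>(-1/5,-1/5,4/5,4/5,4/5)\<close> against a permutation of \<open>(-1,-1,0,0,0)\<close>
  supported on two of its \<open>4/5\<close> entries).\<close>

lemma exhaust_5:
  fixes x :: 5
  shows "x = 1 \<or> x = 2 \<or> x = 3 \<or> x = 4 \<or> x = 5"
proof (induct x)
  case (of_int z)
  then have "z = 0 \<or> z = 1 \<or> z = 2 \<or> z = 3 \<or> z = 4" by fastforce
  then show ?case by auto
qed

lemma forall_5: "(\<forall>i::5. P i) \<longleftrightarrow> P 1 \<and> P 2 \<and> P 3 \<and> P 4 \<and> P 5"
  by (metis exhaust_5)

lemma UNIV_5: "UNIV = {1, 2, 3, 4, 5::5}"
  using exhaust_5 by auto

lemma sum_5: "sum f (UNIV::5 set) = f 1 + f 2 + f 3 + f 4 + f 5"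
  unfolding UNIV_5 by (simp add: algebra_simps)

lemma card_Collect_5:
  "card {i::5. P i} = (if P 1 then 1 else 0) + (if P 2 then 1 else 0) + (if P 3 then 1 else 0)
    + (if P 4 then 1 else 0) + (if P 5 then 1 else 0)"
proof -
  have "card {i::5. P i} = (\<Sum>i\<in>UNIV. if P i then 1 else 0)"
    by (simp add: sum.If_cases)
  then show ?thesis by (simp only: sum_5)
qed

lemma card_Collect_1234:
  "card {i\<in>{1,2,3,4::5}. P i} =
    (if P 1 then 1 else 0) + (if P 2 then 1 else 0) + (if P 3 then 1 else 0) + (if P 4 then 1 else 0)"
proof -
  have "card {i\<in>{1,2,3,4::5}. P i} = (\<Sum>i\<in>{1,2,3,4::5}. if P i then 1 else 0)"
    by (simp add: sum.If_cases Int_def conj_commute)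
  then show ?thesis by (simp add: add.assoc)
qed

definition inner_products :: "'a::real_inner set \<Rightarrow> real set" where
  "inner_products A = {v \<bullet> w |v w. v \<in> A \<and> w \<in> A}"

lemma isometric_inner_products_eq:
  assumes "isometric A B"
  shows "inner_products A = inner_products B"
proof -
  obtain f where f: "orthogonal_transformation f" "f ` A = B"
    using assms by (auto simp: isometric_def)
  then have "f v \<bullet> f w = v \<bullet> w" for v w
    by (simp add: orthogonal_transformation_def)
  then show ?thesis
    unfolding inner_products_def f(2)[symmetric] by (auto simp: image_iff) metis+
qed

text \<open>Scaling by 10 makes every coordinate occurring in the four configurations an integer, so
  the finite checks below are integer arithmetic on explicit lists.\<close>

type_synonym coords5 = "real \<times> real \<times> real \<times> real \<times> real"

definition scaled_coords :: "real^5 \<Rightarrow> coords5" where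
  "scaled_coords v = (10 * v$1, 10 * v$2, 10 * v$3, 10 * v$4, 10 * v$5)"

lemma inner_scaled_coords:
  "v \<bullet> w = scaled_coords v \<bullet> scaled_coords w / 100"
  by (simp add: inner_vec_def sum_5 scaled_coords_def)

definition unscaled_coords :: "coords5 \<Rightarrow> real^5" where
  "unscaled_coords = (\<lambda>(a, b, c, d, e). \<chi> i.
    (if i = 1 then a else if i = 2 then b else if i = 3 then c else if i = 4 then d else e) / 10)"

lemma scaled_unscaled_coords: "scaled_coords (unscaled_coords x) = x"
  by (cases x) (simp add: scaled_coords_def unscaled_coords_def)

lemma inj_scaled_coords: "inj scaled_coords"
  by (rule injI) (simp add: scaled_coords_def vec_eq_iff forall_5)

lemma scaled_coords_image_eqI:
  assumes "\<And>v. v \<in> A \<Longrightarrow> scaled_coords v \<in> set xs"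
    and "\<forall>x\<in>set xs. unscaled_coords x \<in> A"
  shows "scaled_coords ` A = set xs"
  using assms by (metis image_eqI image_subset_iff scaled_unscaled_coords subsetI subset_antisym)

definition D5_coords :: "coords5 list" where
  "D5_coords = [
    (-10, -10, 0, 0, 0), (-10, 0, -10, 0, 0), (-10, 0, 0, -10, 0), (-10, 0, 0, 0, -10),
    (-10, 0, 0, 0, 10), (-10, 0, 0, 10, 0), (-10, 0, 10, 0, 0), (-10, 10, 0, 0, 0),
    (0, -10, -10, 0, 0), (0, -10, 0, -10, 0), (0, -10, 0, 0, -10), (0, -10, 0, 0, 10),
    (0, -10, 0, 10, 0), (0, -10, 10, 0, 0), (0, 0, -10, -10, 0), (0, 0, -10, 0, -10),
    (0, 0, -10, 0, 10), (0, 0, -10, 10, 0), (0, 0, 0, -10, -10), (0, 0, 0, -10, 10),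
    (0, 0, 0, 10, -10), (0, 0, 0, 10, 10), (0, 0, 10, -10, 0), (0, 0, 10, 0, -10),
    (0, 0, 10, 0, 10), (0, 0, 10, 10, 0), (0, 10, -10, 0, 0), (0, 10, 0, -10, 0),
    (0, 10, 0, 0, -10), (0, 10, 0, 0, 10), (0, 10, 0, 10, 0), (0, 10, 10, 0, 0),
    (10, -10, 0, 0, 0), (10, 0, -10, 0, 0), (10, 0, 0, -10, 0), (10, 0, 0, 0, -10),
    (10, 0, 0, 0, 10), (10, 0, 0, 10, 0), (10, 0, 10, 0, 0), (10, 10, 0, 0, 0)]"

definition half_coords :: "coords5 list" where
  "half_coords = [
    (-5, -5, -5, 5, 10), (-5, -5, 5, -5, 10), (-5, 5, -5, -5, 10), (-5, 5, 5, 5, 10),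
    (5, -5, -5, -5, 10), (5, -5, 5, 5, 10), (5, 5, -5, 5, 10), (5, 5, 5, -5, 10)]"

definition fifth_coords :: "coords5 list" where
  "fifth_coords = [
    (-2, -2, 8, 8, 8), (-2, 8, -2, 8, 8), (-2, 8, 8, -2, 8), (-2, 8, 8, 8, -2),
    (8, -2, -2, 8, 8), (8, -2, 8, -2, 8), (8, -2, 8, 8, -2), (8, 8, -2, -2, 8),
    (8, 8, -2, 8, -2), (8, 8, 8, -2, -2)]"

lemma scaled_coords_D5: "scaled_coords ` D5 = set D5_coords"
proof (rule scaled_coords_image_eqI)
  fix v assume "v \<in> D5"
  then have "v$1 \<in> {-1, 0, 1}" "v$2 \<in> {-1, 0, 1}" "v$3 \<in> {-1, 0, 1}" "v$4 \<in> {-1, 0, 1}"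
    "v$5 \<in> {-1, 0, 1}" "card {i. v$i \<noteq> 0} = 2"
    by (auto simp: D5_def)
  then show "scaled_coords v \<in> set D5_coords"
    unfolding scaled_coords_def card_Collect_5 D5_coords_def by (auto split: if_splits)
next
  show "\<forall>x\<in>set D5_coords. unscaled_coords x \<in> D5"
    by (simp add: D5_coords_def D5_def forall_5 card_Collect_5 unscaled_coords_def)
qed

lemma scaled_coords_half_vecs: "scaled_coords ` half_vecs = set half_coords"
proof (rule scaled_coords_image_eqI)
  fix v assume "v \<in> half_vecs"
  then have "v$1 \<in> {-1/2, 1/2}" "v$2 \<in> {-1/2, 1/2}" "v$3 \<in> {-1/2, 1/2}" "v$4 \<in> {-1/2, 1/2}"
    "v$5 = 1" "odd (card {i\<in>{1,2,3,4::5}. v$i < 0})"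
    by (auto simp: half_vecs_def)
  then show "scaled_coords v \<in> set half_coords"
    unfolding scaled_coords_def card_Collect_1234 half_coords_def by (auto split: if_splits)
next
  show "\<forall>x\<in>set half_coords. unscaled_coords x \<in> half_vecs"
    unfolding half_vecs_def mem_Collect_eq card_Collect_1234
    by (simp add: half_coords_def unscaled_coords_def)
qed

lemma scaled_coords_fifth_vecs: "scaled_coords ` fifth_vecs = set fifth_coords"
proof (rule scaled_coords_image_eqI)
  fix v assume "v \<in> fifth_vecs"
  then have "v$1 \<in> {-1/5, 4/5}" "v$2 \<in> {-1/5, 4/5}" "v$3 \<in> {-1/5, 4/5}" "v$4 \<in> {-1/5, 4/5}"
    "v$5 \<in> {-1/5, 4/5}" "card {i. v$i = 4/5} = 3"
    by (auto simp: fifth_vecs_def)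
  then show "scaled_coords v \<in> set fifth_coords"
    unfolding scaled_coords_def card_Collect_5 fifth_coords_def by (auto split: if_splits)
next
  show "\<forall>x\<in>set fifth_coords. unscaled_coords x \<in> fifth_vecs"
    by (simp add: fifth_coords_def fifth_vecs_def forall_5 card_Collect_5 unscaled_coords_def)
qed

fun last_coord :: "coords5 \<Rightarrow> real" where
  "last_coord (a, b, c, d, e) = e"

fun coords_sum :: "coords5 \<Rightarrow> real" where
  "coords_sum (a, b, c, d, e) = a + b + c + d + e"

definition L5_coords :: "coords5 list" where
  "L5_coords = filter (\<lambda>x. last_coord x \<noteq> 10) D5_coords @ half_coords"

definition Q5_coords :: "coords5 list" where
  "Q5_coords = filter (\<lambda>x. coords_sum x \<noteq> 20) D5_coords @ fifth_coords"

definition R5_coords :: "coords5 list" where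
  "R5_coords = filter (\<lambda>x. coords_sum x \<noteq> 20) L5_coords @ fifth_coords"

lemma scaled_coords_L5: "scaled_coords ` L5 = set L5_coords"
proof -
  have "L5 = (D5 - {v\<in>D5. last_coord (scaled_coords v) = 10}) \<union> half_vecs"
    by (simp add: L5_def scaled_coords_def)
  then show ?thesis
    by (auto simp: L5_coords_def scaled_coords_D5 [symmetric] scaled_coords_half_vecs [symmetric])
qed

lemma coord_sum_eq_2_iff: "coord_sum v = 2 \<longleftrightarrow> coords_sum (scaled_coords v) = 20"
  by (simp add: coord_sum_def sum_5 scaled_coords_def) arith

lemma scaled_coords_Q5: "scaled_coords ` Q5 = set Q5_coords"
proof -
  have "Q5 = (D5 - {v\<in>D5. coords_sum (scaled_coords v) = 20}) \<union> fifth_vecs"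
    by (simp add: Q5_def coord_sum_eq_2_iff)
  then show ?thesis
    by (auto simp: Q5_coords_def scaled_coords_D5 [symmetric] scaled_coords_fifth_vecs [symmetric])
qed

lemma scaled_coords_R5: "scaled_coords ` R5 = set R5_coords"
proof -
  have "R5 = (L5 - {v\<in>L5. coords_sum (scaled_coords v) = 20}) \<union> fifth_vecs"
    by (simp add: R5_def coord_sum_eq_2_iff)
  then show ?thesis
    by (auto simp: R5_coords_def scaled_coords_L5 [symmetric] scaled_coords_fifth_vecs [symmetric])
qed

definition kissing_coords :: "coords5 list \<Rightarrow> bool" where
  "kissing_coords xs \<longleftrightarrow> distinct xs \<and>
    (\<forall>x\<in>set xs. x \<bullet> x = 200 \<and> (\<forall>y\<in>set xs. x \<noteq> y \<longrightarrow> x \<bullet> y \<le> 100))"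

lemma kissing_config_if_scaled_coords:
  assumes A: "scaled_coords ` A = set xs" and xs: "kissing_coords xs"
  shows "kissing_config A \<and> card A = length xs"
proof -
  have inj_A: "inj_on scaled_coords A"
    using inj_scaled_coords by (rule inj_on_subset) simp
  have "finite A"
    using A by (metis finite_set finite_imageD inj_A)
  moreover have "card A = length xs"
    using A xs inj_A by (metis card_image distinct_card kissing_coords_def)
  moreover have "v \<bullet> v = 2" if "v \<in> A" for v
    using that A xs by (force simp: kissing_coords_def inner_scaled_coords)
  moreover have "v \<bullet> w \<le> 1" if "v \<in> A" "w \<in> A" "v \<noteq> w" for v w
  proof -
    have "scaled_coords v \<noteq> scaled_coords w"
      using that inj_A by (meson inj_onD)
    then show ?thesis
      using that A xs by (force simp: kissing_coords_def inner_scaled_coords)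
  qed
  ultimately show ?thesis
    by (simp add: kissing_config_def)
qed

lemma kissing_coords_D5_L5_Q5_R5:
  "kissing_coords D5_coords" "kissing_coords L5_coords"
  "kissing_coords Q5_coords" "kissing_coords R5_coords"
  by (simp_all add: kissing_coords_def R5_coords_def Q5_coords_def L5_coords_def
      D5_coords_def half_coords_def fifth_coords_def)

lemma length_D5_L5_Q5_R5_coords:
  "length D5_coords = 40" "length L5_coords = 40" "length Q5_coords = 40" "length R5_coords = 40"
  by (simp_all add: R5_coords_def Q5_coords_def L5_coords_def
      D5_coords_def half_coords_def fifth_coords_def)

lemma mem_inner_products_iff_scaled_coords:
  assumes "scaled_coords ` A = set xs"
  shows "c \<in> inner_products A \<longleftrightarrow> (\<exists>x\<in>set xs. \<exists>y\<in>set xs. x \<bullet> y = 100 * c)"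
proof -
  have "c \<in> inner_products A \<longleftrightarrow>
      (\<exists>v\<in>A. \<exists>w\<in>A. scaled_coords v \<bullet> scaled_coords w = 100 * c)"
    by (auto simp: inner_products_def inner_scaled_coords) (metis mult.commute)+
  also have "\<dots> \<longleftrightarrow> (\<exists>x\<in>set xs. \<exists>y\<in>set xs. x \<bullet> y = 100 * c)"
    unfolding assms [symmetric] by blast
  finally show ?thesis .
qed

lemmas mem_inner_products_iff_coords =
  mem_inner_products_iff_scaled_coords [OF scaled_coords_D5]
  mem_inner_products_iff_scaled_coords [OF scaled_coords_L5]
  mem_inner_products_iff_scaled_coords [OF scaled_coords_Q5]
  mem_inner_products_iff_scaled_coords [OF scaled_coords_R5]

lemma minus_half_inner_products:
  "- 1/2 \<notin> inner_products D5" "- 1/2 \<in> inner_products L5"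
  "- 1/2 \<notin> inner_products Q5" "- 1/2 \<in> inner_products R5"
  by (simp_all add: mem_inner_products_iff_coords R5_coords_def Q5_coords_def L5_coords_def
      D5_coords_def half_coords_def fifth_coords_def)

lemma minus_eight_fifths_inner_products:
  "- 8/5 \<notin> inner_products D5" "- 8/5 \<notin> inner_products L5"
  "- 8/5 \<in> inner_products Q5" "- 8/5 \<in> inner_products R5"
  by (simp_all add: mem_inner_products_iff_coords R5_coords_def Q5_coords_def L5_coords_def
      D5_coords_def half_coords_def fifth_coords_def)

lemma distinct_inner_products: "distinct (map inner_products [D5, L5, Q5, R5])"
  using minus_half_inner_products minus_eight_fifths_inner_products by auto

theorem mainTheorem1:
  shows "(\<forall>A\<in>{D5, L5, Q5, R5}. kissing_config A \<and> card A = 40) \<and>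
         (\<forall>i<4. \<forall>j<4. i \<noteq> j \<longrightarrow> \<not> isometric ([D5, L5, Q5, R5] ! i) ([D5, L5, Q5, R5] ! j))"
proof
  show "\<forall>A\<in>{D5, L5, Q5, R5}. kissing_config A \<and> card A = 40"
    using kissing_config_if_scaled_coords [OF scaled_coords_D5 kissing_coords_D5_L5_Q5_R5(1)]
      kissing_config_if_scaled_coords [OF scaled_coords_L5 kissing_coords_D5_L5_Q5_R5(2)]
      kissing_config_if_scaled_coords [OF scaled_coords_Q5 kissing_coords_D5_L5_Q5_R5(3)]
      kissing_config_if_scaled_coords [OF scaled_coords_R5 kissing_coords_D5_L5_Q5_R5(4)]
    by (simp add: length_D5_L5_Q5_R5_coords)
  show "\<forall>i<4. \<forall>j<4. i \<noteq> j \<longrightarrow> \<not> isometric ([D5, L5, Q5, R5] ! i) ([D5, L5, Q5, R5] ! j)"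
  proof (intro allI impI)
    fix i j :: nat
    assume ij: "i < 4" "j < 4" "i \<noteq> j"
    let ?configs = "[D5, L5, Q5, R5]"
    have len: "length ?configs = 4"
      by simp
    with ij have "map inner_products ?configs ! i \<noteq> map inner_products ?configs ! j"
      using nth_eq_iff_index_eq [OF distinct_inner_products] by (metis length_map)
    with ij len have "inner_products (?configs ! i) \<noteq> inner_products (?configs ! j)"
      by (metis nth_map)
    then show "\<not> isometric (?configs ! i) (?configs ! j)"
      using isometric_inner_products_eq by blast
  qed
qed

end
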